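(* Let $S=\mathbb{C}[x_{ij}: 1\le i\le 4,\ 1\le j\le 3]$, let $M=(x_{ij})$ be the generic $4\times 3$ matrix, and for $i=1,2,3$ let $f_i$ be the determinant of the $3\times 3$ submatrix of $M$ obtained by deleting row $i$. Then $f_1,f_2,f_3$ are cubic forms that do not form a regular sequence and whose collective strength is exactly $2$. Consequently $N(3,3)>2$.
   Context: The strength of a homogeneous element $f$ of a standard graded polynomial ring is the minimal integer $s\ge 0$ such that $f=\sum_{i=1}^{s+1}g_ih_i$ with all $g_i,h_i$ homogeneous of positive degree (or $\infty$ if none exists); constants, including $0$, have strength $-1$. The collective strength of a finite set of homogeneous elements of the same degree is the minimal strength of a nontrivial $\mathbb{C}$-linear combination of them. $N(r,d)$ denotes the least integer $N$ such that any $r$ homogeneous polynomials of degree $d$ with collective strength at least $N$ form a regular sequence. *)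

theory Defs
  imports Complex_Main "HOL-Library.Poly_Mapping" "HOL-Library.Extended_Real" "HOL-Combinatorics.Permutations"
begin

text \<open>Polynomials with complex coefficients in the variables x_0, x_1, ... :
  a polynomial maps exponent vectors (finitely supported nat => nat) to coefficients.\<close>
type_synonym cpoly = "(nat \<Rightarrow>\<^sub>0 nat) \<Rightarrow>\<^sub>0 complex"

definition polys_in :: "nat set \<Rightarrow> cpoly set" where
  "polys_in V = {p. \<forall>m\<in>Poly_Mapping.keys p. Poly_Mapping.keys m \<subseteq> V}"

definition mdeg :: "(nat \<Rightarrow>\<^sub>0 nat) \<Rightarrow> nat" where
  "mdeg m = (\<Sum>i\<in>Poly_Mapping.keys m. Poly_Mapping.lookup m i)"

definition homogeneous :: "nat \<Rightarrow> cpoly \<Rightarrow> bool" where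
  "homogeneous d p \<longleftrightarrow> (\<forall>m\<in>Poly_Mapping.keys p. mdeg m = d)"

definition const_poly :: "complex \<Rightarrow> cpoly" where
  "const_poly c = Poly_Mapping.single 0 c"

definition var :: "nat \<Rightarrow> cpoly" where
  "var i = Poly_Mapping.single (Poly_Mapping.single i 1) 1"

definition is_constant :: "cpoly \<Rightarrow> bool" where
  "is_constant p \<longleftrightarrow> (\<forall>m\<in>Poly_Mapping.keys p. m = 0)"

definition pos_form :: "nat set \<Rightarrow> cpoly \<Rightarrow> bool" where
  "pos_form V g \<longleftrightarrow> g \<in> polys_in V \<and> (\<exists>d>0. homogeneous d g)"

text \<open>Strength in the polynomial ring over V; -1 for constants, \<infinity> if no decomposition.\<close>
definition strength :: "nat set \<Rightarrow> cpoly \<Rightarrow> ereal" where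
  "strength V f = (if is_constant f then -1 else
     Inf {ereal (real s) | s::nat. \<exists>g h. (\<forall>i\<le>s. pos_form V (g i) \<and> pos_form V (h i))
                                  \<and> f = (\<Sum>i\<le>s. g i * h i)})"

definition coll_strength :: "nat set \<Rightarrow> cpoly list \<Rightarrow> ereal" where
  "coll_strength V fs = Inf {strength V (\<Sum>i<length fs. const_poly (c i) * fs ! i) | c.
       \<exists>i<length fs. c i \<noteq> 0}"

definition ideal_gen :: "nat set \<Rightarrow> cpoly list \<Rightarrow> cpoly set" where
  "ideal_gen V gs = {\<Sum>j<length gs. a j * gs ! j | a. \<forall>j<length gs. a j \<in> polys_in V}"

definition regular_seq :: "nat set \<Rightarrow> cpoly list \<Rightarrow> bool" where
  "regular_seq V fs \<longleftrightarrow>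
     (\<forall>i<length fs. \<forall>g\<in>polys_in V.
        g * fs ! i \<in> ideal_gen V (take i fs) \<longrightarrow> g \<in> ideal_gen V (take i fs))
     \<and> 1 \<notin> ideal_gen V fs"

definition N_rd :: "nat \<Rightarrow> nat \<Rightarrow> ereal" where
  "N_rd r d = Inf {ereal (real_of_int N) | N::int. \<forall>n fs.
      (length fs = r \<and> (\<forall>f\<in>set fs. f \<in> polys_in {..<n} \<and> homogeneous d f)
       \<and> coll_strength {..<n} fs \<ge> ereal (real_of_int N)) \<longrightarrow> regular_seq {..<n} fs}"

definition det3 :: "(nat \<Rightarrow> nat \<Rightarrow> cpoly) \<Rightarrow> cpoly" where
  "det3 A = (\<Sum>\<sigma> | \<sigma> permutes {..<3}. of_int (sign \<sigma>) * (\<Prod>j<3. A (\<sigma> j) j))"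

definition genM :: "nat \<Rightarrow> nat \<Rightarrow> cpoly" where
  "genM i j = var (3 * i + j)"

text \<open>Maximal minor deleting row k (0-based): remaining rows in order.\<close>
definition minor_del :: "nat \<Rightarrow> cpoly" where
  "minor_del k = det3 (\<lambda>a b. genM (if a < k then a else a + 1) b)"

end

theory Submission
  imports Defs
begin

text \<open>Not regular: combining two of the Laplace syzygies \<open>\<Sum>\<^sub>i \<plusminus>x\<^sub>i\<^sub>j f\<^sub>i = 0\<close>
  (expansions of \<open>M\<close> with a repeated column) gives \<open>g f\<^sub>3 \<in> (f\<^sub>1, f\<^sub>2)\<close> for a
  \<open>2 \<times> 2\<close> minor \<open>g\<close>, and a quadric cannot lie in an ideal generated by cubics.
  Strength at most 2: expand \<open>f\<^sub>1\<close> along a column. Strength at least 2: a cubic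
  \<open>g\<^sub>0 h\<^sub>0 + \<dots> + g\<^sub>s h\<^sub>s\<close> vanishes where the linear factors of its degree-3 terms
  vanish, a subspace of codimension at most \<open>s + 1\<close>. If \<open>c\<^sub>r \<noteq> 0\<close>, zeroing row \<open>r\<close>
  turns \<open>\<Sum> c\<^sub>i f\<^sub>i\<close> into \<open>c\<^sub>r\<close> times the determinant of the other rows, and every
  codimension-2 subspace of \<open>3 \<times> 3\<close> matrices contains an invertible matrix.\<close>

section \<open>Evaluation of polynomials\<close>

definition monomial_eval :: "(nat \<Rightarrow>\<^sub>0 nat) \<Rightarrow> (nat \<Rightarrow> complex) \<Rightarrow> complex" where
  "monomial_eval m x = (\<Prod>i\<in>Poly_Mapping.keys m. x i ^ Poly_Mapping.lookup m i)"

definition poly_eval :: "cpoly \<Rightarrow> (nat \<Rightarrow> complex) \<Rightarrow> complex" where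
  "poly_eval p x = (\<Sum>m\<in>Poly_Mapping.keys p. Poly_Mapping.lookup p m * monomial_eval m x)"

lemma monomial_eval_superset:
  "finite S \<Longrightarrow> Poly_Mapping.keys m \<subseteq> S \<Longrightarrow>
   monomial_eval m x = (\<Prod>i\<in>S. x i ^ Poly_Mapping.lookup m i)"
  unfolding monomial_eval_def by (rule prod.mono_neutral_left) (auto simp: in_keys_iff)

lemma monomial_eval_add: "monomial_eval (m1 + m2) x = monomial_eval m1 x * monomial_eval m2 x"
proof -
  let ?S = "Poly_Mapping.keys m1 \<union> Poly_Mapping.keys m2"
  have "monomial_eval (m1 + m2) x = (\<Prod>i\<in>?S. x i ^ Poly_Mapping.lookup (m1 + m2) i)"
    by (rule monomial_eval_superset) (simp_all add: keys_add)
  also have "\<dots> = (\<Prod>i\<in>?S. x i ^ Poly_Mapping.lookup m1 i) * (\<Prod>i\<in>?S. x i ^ Poly_Mapping.lookup m2 i)"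
    by (simp add: lookup_add power_add prod.distrib)
  also have "\<dots> = monomial_eval m1 x * monomial_eval m2 x"
    using monomial_eval_superset[of ?S m1 x] monomial_eval_superset[of ?S m2 x] by simp
  finally show ?thesis .
qed

lemma poly_eval_superset:
  "finite S \<Longrightarrow> Poly_Mapping.keys p \<subseteq> S \<Longrightarrow>
   poly_eval p x = (\<Sum>m\<in>S. Poly_Mapping.lookup p m * monomial_eval m x)"
  unfolding poly_eval_def by (rule sum.mono_neutral_left) (auto simp: in_keys_iff)

lemma poly_eval_add: "poly_eval (p + q) x = poly_eval p x + poly_eval q x"
proof -
  let ?S = "Poly_Mapping.keys p \<union> Poly_Mapping.keys q"
  have "poly_eval (p + q) x = (\<Sum>m\<in>?S. Poly_Mapping.lookup (p + q) m * monomial_eval m x)"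
    by (rule poly_eval_superset) (simp_all add: keys_add)
  also have "\<dots> = (\<Sum>m\<in>?S. Poly_Mapping.lookup p m * monomial_eval m x)
                 + (\<Sum>m\<in>?S. Poly_Mapping.lookup q m * monomial_eval m x)"
    by (simp add: lookup_add distrib_right sum.distrib)
  also have "\<dots> = poly_eval p x + poly_eval q x"
    using poly_eval_superset[of ?S p x] poly_eval_superset[of ?S q x] by simp
  finally show ?thesis .
qed

lemma poly_eval_0 [simp]: "poly_eval 0 x = 0"
  by (simp add: poly_eval_def)

lemma poly_eval_sum: "poly_eval (sum f A) x = (\<Sum>a\<in>A. poly_eval (f a) x)"
  by (induction A rule: infinite_finite_induct) (auto simp: poly_eval_add)

lemma poly_eval_uminus: "poly_eval (- p) x = - poly_eval p x"
  using poly_eval_add[of p "- p" x] by (simp add: add_eq_0_iff)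

lemma poly_eval_diff: "poly_eval (p - q) x = poly_eval p x - poly_eval q x"
  using poly_eval_add[of p "- q" x] by (simp add: poly_eval_uminus)

lemma poly_eval_single [simp]: "poly_eval (Poly_Mapping.single m c) x = c * monomial_eval m x"
  by (simp add: poly_eval_def)

lemma sum_single_lookup:
  "(\<Sum>m\<in>Poly_Mapping.keys p. Poly_Mapping.single m (Poly_Mapping.lookup p m)) = p"
  by (rule poly_mapping_eqI) (simp add: lookup_sum lookup_single when_def in_keys_iff)

lemma poly_eval_single_mult:
  "poly_eval (Poly_Mapping.single m c * q) x = c * monomial_eval m x * poly_eval q x"
proof -
  have "Poly_Mapping.single m c * q
      = (\<Sum>m'\<in>Poly_Mapping.keys q. Poly_Mapping.single (m + m') (c * Poly_Mapping.lookup q m'))"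
    by (subst (1) sum_single_lookup[of q, symmetric]) (simp add: sum_distrib_left mult_single)
  then show ?thesis
    by (simp only: poly_eval_sum poly_eval_single)
       (simp add: monomial_eval_add poly_eval_def sum_distrib_left algebra_simps)
qed

lemma poly_eval_mult: "poly_eval (p * q) x = poly_eval p x * poly_eval q x"
proof -
  have "p * q = (\<Sum>m\<in>Poly_Mapping.keys p. Poly_Mapping.single m (Poly_Mapping.lookup p m) * q)"
    by (subst (1) sum_single_lookup[of p, symmetric]) (simp add: sum_distrib_right)
  then show ?thesis
    by (simp only: poly_eval_sum poly_eval_single_mult) (simp add: poly_eval_def[of p] sum_distrib_right)
qed

lemma poly_eval_var [simp]: "poly_eval (var i) x = x i"
  by (simp add: var_def monomial_eval_def)

lemma poly_eval_const_poly [simp]: "poly_eval (const_poly c) x = c"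
  by (simp add: const_poly_def monomial_eval_def)

lemma mdeg_superset:
  "finite S \<Longrightarrow> Poly_Mapping.keys m \<subseteq> S \<Longrightarrow> mdeg m = (\<Sum>i\<in>S. Poly_Mapping.lookup m i)"
  unfolding mdeg_def by (rule sum.mono_neutral_left) (auto simp: in_keys_iff)

lemma mdeg_add: "mdeg (m1 + m2) = mdeg m1 + mdeg m2"
proof -
  let ?S = "Poly_Mapping.keys m1 \<union> Poly_Mapping.keys m2"
  have "mdeg (m1 + m2) = (\<Sum>i\<in>?S. Poly_Mapping.lookup (m1 + m2) i)"
    by (rule mdeg_superset) (simp_all add: keys_add)
  then show ?thesis
    using mdeg_superset[of ?S m1] mdeg_superset[of ?S m2] by (simp add: lookup_add sum.distrib)
qed

lemma mdeg_single [simp]: "mdeg (Poly_Mapping.single i k) = k"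
  by (simp add: mdeg_def)

lemma mdeg_eq_0_iff: "mdeg m = 0 \<longleftrightarrow> m = 0"
  by (auto simp: mdeg_def in_keys_iff intro: poly_mapping_eqI)

lemma mdeg_eq_1_iff: "mdeg m = 1 \<longleftrightarrow> (\<exists>i. m = Poly_Mapping.single i 1)"
proof
  assume deg: "mdeg m = 1"
  then obtain i where i: "i \<in> Poly_Mapping.keys m"
    unfolding mdeg_def by (metis ex_in_conv sum.empty zero_neq_one)
  have "mdeg m = Poly_Mapping.lookup m i + (\<Sum>j\<in>Poly_Mapping.keys m - {i}. Poly_Mapping.lookup m j)"
    unfolding mdeg_def using i by (simp add: sum.remove)
  moreover have "Poly_Mapping.lookup m i \<noteq> 0"
    using i by (simp add: in_keys_iff)
  ultimately have one: "Poly_Mapping.lookup m i = 1"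
    and rest: "(\<Sum>j\<in>Poly_Mapping.keys m - {i}. Poly_Mapping.lookup m j) = 0"
    using deg by linarith+
  have "Poly_Mapping.lookup m j = 0" if "j \<noteq> i" for j
    using rest that by (auto simp: in_keys_iff)
  then have "m = Poly_Mapping.single i 1"
    using one by (intro poly_mapping_eqI) (auto simp: lookup_single when_def)
  then show "\<exists>i. m = Poly_Mapping.single i 1" ..
qed auto

lemma homogeneous_0 [simp]: "homogeneous d 0"
  by (simp add: homogeneous_def)

lemma homogeneous_add: "homogeneous d p \<Longrightarrow> homogeneous d q \<Longrightarrow> homogeneous d (p + q)"
  using keys_add[of p q] by (auto simp: homogeneous_def)

lemma homogeneous_diff: "homogeneous d p \<Longrightarrow> homogeneous d q \<Longrightarrow> homogeneous d (p - q)"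
  using keys_diff[of p q] by (auto simp: homogeneous_def)

lemma homogeneous_sum: "(\<And>a. a \<in> A \<Longrightarrow> homogeneous d (f a)) \<Longrightarrow> homogeneous d (sum f A)"
  by (induction A rule: infinite_finite_induct) (auto intro: homogeneous_add)

lemma homogeneous_mult: "homogeneous a p \<Longrightarrow> homogeneous b q \<Longrightarrow> homogeneous (a + b) (p * q)"
  unfolding homogeneous_def
proof
  fix m assume "\<forall>m\<in>Poly_Mapping.keys p. mdeg m = a" "\<forall>m\<in>Poly_Mapping.keys q. mdeg m = b"
    and "m \<in> Poly_Mapping.keys (p * q)"
  then show "mdeg m = a + b"
    using keys_mult[of p q] by (auto simp: mdeg_add)
qed

lemma homogeneous_var [simp]: "homogeneous 1 (var i)"
  by (simp add: homogeneous_def var_def)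

lemma homogeneous_const_poly [simp]: "homogeneous 0 (const_poly c)"
  by (simp add: homogeneous_def const_poly_def mdeg_def)

lemma homogeneous_not_constant:
  "homogeneous d p \<Longrightarrow> 0 < d \<Longrightarrow> p \<noteq> 0 \<Longrightarrow> \<not> is_constant p"
  unfolding homogeneous_def is_constant_def by (metis keys_eq_empty ex_in_conv mdeg_eq_0_iff neq0_conv)

lemma polys_in_add: "p \<in> polys_in V \<Longrightarrow> q \<in> polys_in V \<Longrightarrow> p + q \<in> polys_in V"
  using keys_add[of p q] by (auto simp: polys_in_def)

lemma polys_in_diff: "p \<in> polys_in V \<Longrightarrow> q \<in> polys_in V \<Longrightarrow> p - q \<in> polys_in V"
  using keys_diff[of p q] by (auto simp: polys_in_def)

lemma polys_in_mult: "p \<in> polys_in V \<Longrightarrow> q \<in> polys_in V \<Longrightarrow> p * q \<in> polys_in V"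
  unfolding polys_in_def
proof (intro CollectI ballI)
  fix m assume "p \<in> {p. \<forall>m\<in>Poly_Mapping.keys p. Poly_Mapping.keys m \<subseteq> V}"
    "q \<in> {p. \<forall>m\<in>Poly_Mapping.keys p. Poly_Mapping.keys m \<subseteq> V}" "m \<in> Poly_Mapping.keys (p * q)"
  moreover obtain m1 m2 where "m = m1 + m2" "m1 \<in> Poly_Mapping.keys p" "m2 \<in> Poly_Mapping.keys q"
    using keys_mult[of p q] calculation(3) by blast
  ultimately show "Poly_Mapping.keys m \<subseteq> V"
    using keys_add[of m1 m2] by blast
qed

lemma polys_in_var: "i \<in> V \<Longrightarrow> var i \<in> polys_in V"
  by (simp add: polys_in_def var_def)

definition hom_part :: "nat \<Rightarrow> cpoly \<Rightarrow> cpoly" where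
  "hom_part d p = (\<Sum>m\<in>{m\<in>Poly_Mapping.keys p. mdeg m = d}. Poly_Mapping.single m (Poly_Mapping.lookup p m))"

lemma lookup_hom_part:
  "Poly_Mapping.lookup (hom_part d p) m = (if mdeg m = d then Poly_Mapping.lookup p m else 0)"
  by (auto simp: hom_part_def lookup_sum lookup_single when_def in_keys_iff)

lemma hom_part_0 [simp]: "hom_part d 0 = 0"
  by (rule poly_mapping_eqI) (simp add: lookup_hom_part)

lemma hom_part_add: "hom_part d (p + q) = hom_part d p + hom_part d q"
  by (rule poly_mapping_eqI) (simp add: lookup_hom_part lookup_add)

lemma hom_part_sum: "hom_part d (sum f A) = (\<Sum>a\<in>A. hom_part d (f a))"
  by (induction A rule: infinite_finite_induct) (simp_all add: hom_part_add)

lemma hom_part_homogeneous: "homogeneous e p \<Longrightarrow> hom_part d p = (if e = d then p else 0)"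
  by (rule poly_mapping_eqI) (auto simp: lookup_hom_part homogeneous_def in_keys_iff)

lemma linear_form_eval:
  assumes "finite V" "homogeneous 1 l" "l \<in> polys_in V"
  shows "\<exists>a. \<forall>x. poly_eval l x = (\<Sum>i\<in>V. a i * x i)"
proof -
  let ?e = "\<lambda>i. Poly_Mapping.single i (1::nat)"
  have keys: "Poly_Mapping.keys l \<subseteq> ?e ` V"
  proof
    fix m assume m: "m \<in> Poly_Mapping.keys l"
    then obtain i where i: "m = ?e i"
      using assms(2) mdeg_eq_1_iff by (auto simp: homogeneous_def)
    then have "i \<in> V" using assms(3) m by (auto simp: polys_in_def)
    then show "m \<in> ?e ` V" using i by blast
  qed
  have inj: "inj_on ?e V"
    by (rule inj_onI) (metis lookup_single_eq lookup_single_not_eq one_neq_zero)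
  have "poly_eval l x = (\<Sum>i\<in>V. Poly_Mapping.lookup l (?e i) * x i)" for x
    by (subst poly_eval_superset[OF _ keys], simp add: assms(1), subst sum.reindex[OF inj])
       (simp add: monomial_eval_def mult.commute)
  then show ?thesis
    by (intro exI[of _ "\<lambda>i. Poly_Mapping.lookup l (?e i)"]) simp
qed

section \<open>Strength and collective strength\<close>

lemma hom_part_product_vanishes_on_hyperplane:
  assumes "finite V" "pos_form V g" "pos_form V h"
  shows "\<exists>a. \<forall>x. (\<Sum>i\<in>V. a i * x i) = 0 \<longrightarrow> poly_eval (hom_part 3 (g * h)) x = 0"
proof -
  obtain d e where d: "0 < d" "homogeneous d g" and e: "0 < e" "homogeneous e h"
    using assms(2,3) by (auto simp: pos_form_def)
  have part: "hom_part 3 (g * h) = (if d + e = 3 then g * h else 0)"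
    using homogeneous_mult[OF d(2) e(2)] by (rule hom_part_homogeneous)
  show ?thesis
  proof (cases "d + e = 3")
    case True
    then have "d = 1 \<or> e = 1" using d(1) e(1) by linarith
    then obtain l r where "g * h = l * r" "homogeneous 1 l" "l \<in> polys_in V"
      using d e assms(2,3) by (metis mult.commute pos_form_def)
    moreover obtain a where "\<forall>x. poly_eval l x = (\<Sum>i\<in>V. a i * x i)"
      using linear_form_eval[OF assms(1)] calculation(2,3) by blast
    ultimately show ?thesis
      using part True by (auto simp: poly_eval_mult)
  qed (use part in auto)
qed

text \<open>A product of positive-degree forms contributes to the degree-3 part only if one factor is
  linear.\<close>
lemma cubic_vanishes_on_subspace:
  assumes "finite V" "homogeneous 3 F"
    and "\<forall>j\<le>s. pos_form V (g j) \<and> pos_form V (h j)" "F = (\<Sum>j\<le>s. g j * h j)"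
  shows "\<exists>a. \<forall>x. (\<forall>j\<le>s. (\<Sum>i\<in>V. a j i * x i) = 0) \<longrightarrow> poly_eval F x = 0"
proof -
  have "\<forall>j\<in>{..s}. \<exists>a. \<forall>x. (\<Sum>i\<in>V. a i * x i) = 0 \<longrightarrow> poly_eval (hom_part 3 (g j * h j)) x = 0"
    using hom_part_product_vanishes_on_hyperplane[OF assms(1)] assms(3) by blast
  then obtain a where a: "\<And>j x. j \<le> s \<Longrightarrow> (\<Sum>i\<in>V. a j i * x i) = 0 \<Longrightarrow>
      poly_eval (hom_part 3 (g j * h j)) x = 0"
    by (metis atMost_iff bchoice)
  have "F = (\<Sum>j\<le>s. hom_part 3 (g j * h j))"
    using hom_part_homogeneous[OF assms(2), of 3] assms(4) by (simp add: hom_part_sum)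
  then have "poly_eval F x = (\<Sum>j\<le>s. poly_eval (hom_part 3 (g j * h j)) x)" for x
    by (simp add: poly_eval_sum)
  then have "poly_eval F x = 0" if "\<forall>j\<le>s. (\<Sum>i\<in>V. a j i * x i) = 0" for x
    using a that by simp
  then show ?thesis
    by blast
qed

lemma strength_le_decomposition:
  assumes "\<forall>i\<le>s. pos_form V (g i) \<and> pos_form V (h i)" "f = (\<Sum>i\<le>s. g i * h i)"
  shows "strength V f \<le> ereal (real s)"
proof (cases "is_constant f")
  case False
  have "ereal (real s) \<in> {ereal (real s) | s::nat. \<exists>g h.
      (\<forall>i\<le>s. pos_form V (g i) \<and> pos_form V (h i)) \<and> f = (\<Sum>i\<le>s. g i * h i)}"
    using assms by blast
  then show ?thesis
    using False by (simp add: strength_def Inf_lower)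
qed (simp add: strength_def one_ereal_def)

lemma strength_geI:
  assumes "\<not> is_constant f"
    and "\<And>s g h. \<forall>i\<le>s. pos_form V (g i) \<and> pos_form V (h i) \<Longrightarrow> f = (\<Sum>i\<le>s. g i * h i) \<Longrightarrow> k \<le> s"
  shows "ereal (real k) \<le> strength V f"
  using assms by (auto simp: strength_def intro!: Inf_greatest)

definition lin_comb :: "cpoly list \<Rightarrow> (nat \<Rightarrow> complex) \<Rightarrow> cpoly" where
  "lin_comb fs c = (\<Sum>i<length fs. const_poly (c i) * fs ! i)"

lemma homogeneous_lin_comb:
  assumes "\<forall>f\<in>set fs. homogeneous d f"
  shows "homogeneous d (lin_comb fs c)"
  unfolding lin_comb_def
proof (rule homogeneous_sum)
  fix i assume "i \<in> {..<length fs}"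
  then have "homogeneous (0 + d) (const_poly (c i) * fs ! i)"
    using assms by (intro homogeneous_mult) simp_all
  then show "homogeneous d (const_poly (c i) * fs ! i)"
    by simp
qed

lemma coll_strength_le:
  "i < length fs \<Longrightarrow> c i \<noteq> 0 \<Longrightarrow> coll_strength V fs \<le> strength V (lin_comb fs c)"
  unfolding coll_strength_def lin_comb_def by (rule Inf_lower) blast

lemma coll_strength_geI:
  assumes "\<And>c i. i < length fs \<Longrightarrow> c i \<noteq> 0 \<Longrightarrow> k \<le> strength V (lin_comb fs c)"
  shows "k \<le> coll_strength V fs"
  using assms unfolding coll_strength_def lin_comb_def by (auto intro!: Inf_greatest)

lemma N_rd_gt_of_not_regular:
  assumes "length fs = r" "\<forall>f\<in>set fs. f \<in> polys_in {..<n} \<and> homogeneous d f"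
    and "ereal (real_of_int k) \<le> coll_strength {..<n} fs" "\<not> regular_seq {..<n} fs"
  shows "ereal (real_of_int k) < N_rd r d"
proof -
  have "ereal (real_of_int (k + 1)) \<le> N_rd r d"
    unfolding N_rd_def
  proof (rule Inf_greatest, clarify)
    fix N :: int
    assume "\<forall>n fs. length fs = r \<and> (\<forall>f\<in>set fs. f \<in> polys_in {..<n} \<and> homogeneous d f)
        \<and> ereal (real_of_int N) \<le> coll_strength {..<n} fs \<longrightarrow> regular_seq {..<n} fs"
    then have "\<not> ereal (real_of_int N) \<le> coll_strength {..<n} fs"
      using assms by blast
    then have "k < N"
      using assms(3) by (metis ereal_less_eq(3) of_int_le_iff order_trans not_less)
    then show "ereal (real_of_int (k + 1)) \<le> ereal (real_of_int N)"
      by simp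
  qed
  then show ?thesis
    by (rule less_le_trans[rotated]) simp
qed

lemma lower_degree_form_not_in_ideal:
  assumes "\<forall>f\<in>set fs. homogeneous d f" "homogeneous e g" "e < d" "g \<noteq> 0"
  shows "g \<notin> ideal_gen V fs"
proof
  assume "g \<in> ideal_gen V fs"
  then obtain a where g: "g = (\<Sum>j<length fs. a j * fs ! j)"
    by (auto simp: ideal_gen_def)
  obtain m where m: "m \<in> Poly_Mapping.keys g"
    using assms(4) by (metis keys_eq_empty ex_in_conv)
  moreover have "Poly_Mapping.keys g \<subseteq> (\<Union>j\<in>{..<length fs}. Poly_Mapping.keys (a j * fs ! j))"
    unfolding g by (rule keys_sum)
  ultimately obtain j where j: "j < length fs" "m \<in> Poly_Mapping.keys (a j * fs ! j)"
    by auto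
  then obtain m1 m2 where "m = m1 + m2" and "m2 \<in> Poly_Mapping.keys (fs ! j)"
    using keys_mult[of "a j" "fs ! j"] by blast
  moreover have "mdeg m2 = d"
    using assms(1) nth_mem[OF j(1)] \<open>m2 \<in> Poly_Mapping.keys (fs ! j)\<close> by (simp add: homogeneous_def)
  ultimately have "d \<le> mdeg m"
    by (simp add: mdeg_add)
  moreover have "mdeg m = e"
    using assms(2) m by (simp add: homogeneous_def)
  ultimately show False
    using assms(3) by simp
qed

section \<open>Invertible matrices in codimension-2 subspaces\<close>

definition sarrus :: "(nat \<Rightarrow> nat \<Rightarrow> 'a::comm_ring_1) \<Rightarrow> 'a" where
  "sarrus A = A 0 0 * A 1 1 * A 2 2 + A 1 0 * A 2 1 * A 0 2 + A 2 0 * A 0 1 * A 1 2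
     - A 0 0 * A 2 1 * A 1 2 - A 1 0 * A 0 1 * A 2 2 - A 2 0 * A 1 1 * A 0 2"

lemma det3_eq_sarrus: "det3 A = sarrus A"
proof -
  have three: "{..<3::nat} = insert 0 (insert 1 {2})" by auto
  have ins1: "finite (insert (1::nat) {2})" "(0::nat) \<notin> insert 1 {2}"
    and ins2: "finite {2::nat}" "(1::nat) \<notin> {2}"
    by auto
  show ?thesis
    unfolding det3_def three sum_over_permutations_insert[OF ins1] sum_over_permutations_insert[OF ins2]
      permutes_sing sarrus_def
    by (simp add: sign_swap_id permutation_swap_id sign_compose transpose_def algebra_simps)
qed

lemma poly_eval_sarrus: "poly_eval (sarrus A) x = sarrus (\<lambda>i j. poly_eval (A i j) x)"
  by (simp add: sarrus_def poly_eval_add poly_eval_diff poly_eval_mult)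

lemma homogeneous_sarrus:
  assumes "\<And>i j. i < 3 \<Longrightarrow> j < 3 \<Longrightarrow> homogeneous 1 (A i j)"
  shows "homogeneous 3 (sarrus A)"
proof -
  have "homogeneous 3 (A i j * A k l * A m n)"
    if "i < 3" "j < 3" "k < 3" "l < 3" "m < 3" "n < 3" for i j k l m n
    using homogeneous_mult[OF homogeneous_mult[OF assms assms] assms] that by (simp add: numeral_3_eq_3)
  then show ?thesis
    unfolding sarrus_def by (intro homogeneous_diff homogeneous_add) auto
qed

lemma polys_in_sarrus:
  "(\<And>i j. i < 3 \<Longrightarrow> j < 3 \<Longrightarrow> A i j \<in> polys_in V) \<Longrightarrow> sarrus A \<in> polys_in V"
  unfolding sarrus_def by (intro polys_in_diff polys_in_add polys_in_mult) auto

lemma sum_fun_upd2: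
  fixes a z :: "nat \<Rightarrow> 'a::comm_ring"
  assumes "finite S" "p \<in> S" "q \<in> S" "p \<noteq> q"
  shows "(\<Sum>t\<in>S. a t * (z(p := u, q := v)) t) = (\<Sum>t\<in>S. a t * z t) + a p * (u - z p) + a q * (v - z q)"
proof -
  have "a t * (z(p := u, q := v)) t
      = a t * z t + (if t = p then a p * (u - z p) else 0) + (if t = q then a q * (v - z q) else 0)" for t
    using assms(4) by (auto simp: algebra_simps)
  then show ?thesis
    using assms by (simp add: sum.distrib sum.delta)
qed

lemma two_coordinates_solve_by_cramer:
  fixes a b :: "nat \<Rightarrow> 'a::field"
  assumes "finite V" "p \<in> V" "q \<in> V" "a p * b q - a q * b p \<noteq> 0"
  shows "\<exists>u v. (\<Sum>t\<in>V. a t * (z(p := u, q := v)) t) = 0 \<and> (\<Sum>t\<in>V. b t * (z(p := u, q := v)) t) = 0"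
proof -
  have "p \<noteq> q"
    using assms(4) by auto
  define A B where "A = (\<Sum>t\<in>V. a t * z t)" and "B = (\<Sum>t\<in>V. b t * z t)"
  define u v where "u = z p + (a q * B - b q * A) / (a p * b q - a q * b p)"
    and "v = z q + (b p * A - a p * B) / (a p * b q - a q * b p)"
  have "A + a p * (u - z p) + a q * (v - z q) = 0" "B + b p * (u - z p) + b q * (v - z q) = 0"
    using assms(4) by (simp_all add: u_def v_def field_simps)
  then show ?thesis
    unfolding sum_fun_upd2[OF assms(1-3) \<open>p \<noteq> q\<close>] A_def B_def by blast
qed

lemma two_coordinates_solve_proportional:
  fixes a b c :: "nat \<Rightarrow> 'a::field"
  assumes "finite V" "p \<in> V" "q \<in> V" "p \<noteq> q" "c p \<noteq> 0"
    and "\<And>t. t \<in> V \<Longrightarrow> a t = k * c t" "\<And>t. t \<in> V \<Longrightarrow> b t = l * c t"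
  shows "\<exists>u v. (\<Sum>t\<in>V. a t * (z(p := u, q := v)) t) = 0 \<and> (\<Sum>t\<in>V. b t * (z(p := u, q := v)) t) = 0"
proof -
  define u where "u = z p - (\<Sum>t\<in>V. c t * z t) / c p"
  let ?z = "z(p := u, q := z q)"
  have c0: "(\<Sum>t\<in>V. c t * ?z t) = 0"
    unfolding sum_fun_upd2[OF assms(1-4)] using assms(5) by (simp add: u_def)
  have "(\<Sum>t\<in>V. a t * ?z t) = k * (\<Sum>t\<in>V. c t * ?z t)" "(\<Sum>t\<in>V. b t * ?z t) = l * (\<Sum>t\<in>V. c t * ?z t)"
    using assms(6,7) by (simp_all add: sum_distrib_left mult.assoc cong: sum.cong)
  with c0 show ?thesis
    by (intro exI conjI) simp_all
qed

lemma two_linear_equations_solvable_in_two_coordinates: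
  fixes a b :: "nat \<Rightarrow> 'a::field"
  assumes "finite V" "2 \<le> card V"
  shows "\<exists>p\<in>V. \<exists>q\<in>V. p \<noteq> q \<and> (\<forall>z. \<exists>u v.
           (\<Sum>t\<in>V. a t * (z(p := u, q := v)) t) = 0 \<and> (\<Sum>t\<in>V. b t * (z(p := u, q := v)) t) = 0)"
    (is "\<exists>p\<in>V. \<exists>q\<in>V. p \<noteq> q \<and> ?solvable p q")
proof -
  have witness: ?thesis if "p \<in> V" "q \<in> V" "p \<noteq> q" "?solvable p q" for p q
  proof (rule bexI[OF _ that(1)], rule bexI[OF _ that(2)])
    show "p \<noteq> q \<and> ?solvable p q"
      using that(3,4) ..
  qed
  have "\<not> card V \<le> Suc 0"
    using assms(2) by simp
  then obtain p0 q0 where pq0: "p0 \<in> V" "q0 \<in> V" "p0 \<noteq> q0"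
    using card_le_Suc0_iff_eq[OF assms(1)] by blast
  show ?thesis
  proof (cases "\<exists>p\<in>V. \<exists>q\<in>V. a p * b q - a q * b p \<noteq> 0")
    case True
    then obtain p q where pq: "p \<in> V" "q \<in> V" and minor: "a p * b q - a q * b p \<noteq> 0"
      by blast
    then have "p \<noteq> q"
      by auto
    moreover have "?solvable p q"
      by (intro allI two_coordinates_solve_by_cramer[OF assms(1) pq minor])
    ultimately show ?thesis
      using witness pq by blast
  next
    case no_minor: False
    show ?thesis
    proof (cases "\<exists>p\<in>V. a p \<noteq> 0 \<or> b p \<noteq> 0")
      case True
      then obtain p where p: "p \<in> V" "a p \<noteq> 0 \<or> b p \<noteq> 0"
        by blast
      obtain q where q: "q \<in> V" "p \<noteq> q"
        using pq0 by (cases "p = p0") auto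
      define c where "c = (if a p \<noteq> 0 then a else b)"
      have cp: "c p \<noteq> 0"
        using p(2) by (simp add: c_def)
      have "a t = a p / c p * c t \<and> b t = b p / c p * c t" if "t \<in> V" for t
      proof -
        have "a p * b t = a t * b p"
          using no_minor p(1) that by auto
        then show ?thesis
          using cp by (auto simp: c_def field_simps split: if_splits)
      qed
      then have "?solvable p q"
        by (intro allI two_coordinates_solve_proportional[where c = c and k = "a p / c p" and l = "b p / c p", OF assms(1) p(1) q cp]) simp_all
      then show ?thesis
        using witness p(1) q by blast
    next
      case False
      then have "?solvable p0 q0"
        by (auto intro!: sum.neutral)
      then show ?thesis
        using witness pq0 by blast
    qed
  qed
qed

definition det_rowmajor :: "(nat \<Rightarrow> complex) \<Rightarrow> complex" where
  "det_rowmajor y = sarrus (\<lambda>i j. y (3 * i + j))"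

fun perm_matrix :: "nat \<times> nat \<times> nat \<Rightarrow> nat \<Rightarrow> complex" where
  "perm_matrix (i, j, k) t = (if t = i \<or> t = 3 + j \<or> t = 6 + k then 1 else 0)"

text \<open>Take a permutation matrix without a \<open>1\<close> at \<open>p\<close> or \<open>q\<close> such that the entries at \<open>p\<close>
  and \<open>q\<close> do not complete it to the support of another permutation; then no term of the
  determinant involves those entries, so it stays \<open>\<plusminus>1\<close>.\<close>
lemma invertible_under_two_entry_changes:
  assumes "p < 9" "q < 9" "p \<noteq> q"
  shows "\<exists>z. \<forall>u v. det_rowmajor (z(p := u, q := v)) \<noteq> 0"
proof -
  have "\<forall>p\<in>{..<9}. \<forall>q\<in>{..<9}. p \<noteq> q \<longrightarrow>
      (\<exists>\<sigma>\<in>{(0,1,2), (0,2,1), (1,0,2), (1,2,0), (2,0,1), (2,1,0)}.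
         \<forall>u v. det_rowmajor ((perm_matrix \<sigma>)(p := u, q := v)) \<noteq> 0)"
    by (simp add: lessThan_nat_numeral lessThan_Suc det_rowmajor_def sarrus_def)
  then obtain \<sigma> where "\<forall>u v. det_rowmajor ((perm_matrix \<sigma>)(p := u, q := v)) \<noteq> 0"
    using assms by (meson lessThan_iff)
  then show ?thesis
    by (rule exI[of _ "perm_matrix \<sigma>"])
qed

lemma invertible_matrix_in_codim_2_subspace:
  "\<exists>y. (\<Sum>t<9. a t * y t) = 0 \<and> (\<Sum>t<9. b t * y t) = 0 \<and> det_rowmajor y \<noteq> 0"
proof -
  have "\<exists>p\<in>{..<9}. \<exists>q\<in>{..<9}. p \<noteq> q \<and> (\<forall>z. \<exists>u v.
      (\<Sum>t<9. a t * (z(p := u, q := v)) t) = 0 \<and> (\<Sum>t<9. b t * (z(p := u, q := v)) t) = 0)"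
    by (rule two_linear_equations_solvable_in_two_coordinates) simp_all
  then obtain p q where pq: "p < 9" "q < 9" "p \<noteq> q"
    and solve: "\<And>z. \<exists>u v. (\<Sum>t<9. a t * (z(p := u, q := v)) t) = 0
                          \<and> (\<Sum>t<9. b t * (z(p := u, q := v)) t) = 0"
    unfolding lessThan_iff by blast
  obtain z where z: "\<And>u v. det_rowmajor (z(p := u, q := v)) \<noteq> 0"
    using invertible_under_two_entry_changes[OF pq] by blast
  obtain u v where "(\<Sum>t<9. a t * (z(p := u, q := v)) t) = 0" "(\<Sum>t<9. b t * (z(p := u, q := v)) t) = 0"
    using solve by blast
  with z[of u v] show ?thesis
    by (intro exI[of _ "z(p := u, q := v)"]) simp
qed

section \<open>The maximal minors of the generic 4 by 3 matrix\<close>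

lemma poly_eval_minor_del:
  "poly_eval (minor_del k) x = sarrus (\<lambda>i j. x (3 * (if i < k then i else i + 1) + j))"
  unfolding minor_del_def det3_eq_sarrus poly_eval_sarrus genM_def by simp

lemma homogeneous_minor_del: "homogeneous 3 (minor_del k)"
  unfolding minor_del_def det3_eq_sarrus genM_def by (rule homogeneous_sarrus, rule homogeneous_var)

lemma minor_del_in_polys: "k < 3 \<Longrightarrow> minor_del k \<in> polys_in {..<12}"
  unfolding minor_del_def det3_eq_sarrus genM_def by (rule polys_in_sarrus) (auto intro!: polys_in_var)

abbreviation maximal_minors :: "cpoly list" where
  "maximal_minors \<equiv> [minor_del 0, minor_del 1, minor_del 2]"

lemma poly_eval_lin_comb_maximal_minors:
  "poly_eval (lin_comb maximal_minors c) x = (\<Sum>i<3. c i * poly_eval (minor_del i) x)"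
  by (simp add: lin_comb_def poly_eval_add poly_eval_mult lessThan_nat_numeral lessThan_Suc eval_nat_numeral)

text \<open>Zeros in row \<open>r\<close> kill every minor using that row, leaving \<open>c r\<close> times the determinant
  of the other three rows; the two linear conditions only see the entries of those rows.\<close>
lemma maximal_minor_combination_nonvanishing:
  assumes "r < 3" "c r \<noteq> 0"
  shows "\<exists>x. (\<Sum>i<12. \<alpha> i * x i) = 0 \<and> (\<Sum>i<12. \<beta> i * x i) = 0
           \<and> poly_eval (lin_comb maximal_minors c) x \<noteq> 0"
proof -
  define skip where "skip t = (if t < 3 * r then t else t + 3)" for t
  obtain y where y: "(\<Sum>t<9. \<alpha> (skip t) * y t) = 0" "(\<Sum>t<9. \<beta> (skip t) * y t) = 0"
    "det_rowmajor y \<noteq> 0"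
    using invertible_matrix_in_codim_2_subspace[of "\<lambda>t. \<alpha> (skip t)" "\<lambda>t. \<beta> (skip t)"] by blast
  define x where "x n = (if n < 3 * r then y n else if n < 3 * r + 3 then 0 else y (n - 3))" for n
  have r: "r = 0 \<or> r = 1 \<or> r = 2"
    using assms(1) by auto
  have "(\<Sum>i<12. \<alpha> i * x i) = (\<Sum>t<9. \<alpha> (skip t) * y t)"
    "(\<Sum>i<12. \<beta> i * x i) = (\<Sum>t<9. \<beta> (skip t) * y t)"
    using r by (auto simp: x_def skip_def lessThan_nat_numeral lessThan_Suc)
  moreover have "poly_eval (lin_comb maximal_minors c) x = c r * det_rowmajor y"
    unfolding poly_eval_lin_comb_maximal_minors
    using r by (auto simp: poly_eval_minor_del sarrus_def
        det_rowmajor_def x_def lessThan_nat_numeral lessThan_Suc algebra_simps eval_nat_numeral)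
  ultimately show ?thesis
    using y assms(2) by auto
qed

lemma strength_maximal_minor_combination:
  assumes "r < 3" "c r \<noteq> 0"
  shows "2 \<le> strength {..<12} (lin_comb maximal_minors c)"
proof -
  let ?F = "lin_comb maximal_minors c"
  have hom: "homogeneous 3 ?F"
    by (rule homogeneous_lin_comb) (simp add: homogeneous_minor_del)
  obtain x where "poly_eval ?F x \<noteq> 0"
    using maximal_minor_combination_nonvanishing[of r c "\<lambda>_. 0" "\<lambda>_. 0", OF assms] by auto
  then have "?F \<noteq> 0"
    by auto
  have "ereal (real 2) \<le> strength {..<12} ?F"
  proof (rule strength_geI)
    show "\<not> is_constant ?F"
      using homogeneous_not_constant[OF hom] \<open>?F \<noteq> 0\<close> by simp
  next
    fix s :: nat and g h
    assume dec: "\<forall>i\<le>s. pos_form {..<12} (g i) \<and> pos_form {..<12} (h i)" "?F = (\<Sum>i\<le>s. g i * h i)"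
    show "2 \<le> s"
    proof (rule ccontr)
      assume "\<not> 2 \<le> s"
      then have only: "j = 0 \<or> j = s" if "j \<le> s" for j
        using that by auto
      obtain a where a: "\<And>x. \<forall>j\<le>s. (\<Sum>i<12. a j i * x i) = 0 \<Longrightarrow> poly_eval ?F x = 0"
        using cubic_vanishes_on_subspace[OF _ hom dec] by auto
      obtain x where "(\<Sum>i<12. a 0 i * x i) = 0" "(\<Sum>i<12. a s i * x i) = 0" "poly_eval ?F x \<noteq> 0"
        using maximal_minor_combination_nonvanishing[of r c "a 0" "a s", OF assms] by blast
      then show False
        using a only by metis
    qed
  qed
  then show ?thesis
    by simp
qed

lemma minor_del_0_laplace:
  "minor_del 0 = var 3 * (var 7 * var 11 - var 10 * var 8) + var 6 * (var 10 * var 5 - var 4 * var 11)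
                 + var 9 * (var 4 * var 8 - var 7 * var 5)"
  by (simp add: minor_del_def det3_eq_sarrus sarrus_def genM_def algebra_simps)

lemma pos_form_var: "i \<in> V \<Longrightarrow> pos_form V (var i)"
  unfolding pos_form_def by (intro conjI exI[of _ 1] polys_in_var homogeneous_var) simp_all

lemma homogeneous_quadric: "homogeneous 2 (var i * var j - var k * var l)"
proof -
  have "homogeneous (1 + 1) (var i * var j - var k * var l)"
    by (intro homogeneous_diff homogeneous_mult homogeneous_var)
  then show ?thesis
    by (simp only: one_add_one)
qed

lemma pos_form_quadric:
  "i \<in> V \<Longrightarrow> j \<in> V \<Longrightarrow> k \<in> V \<Longrightarrow> l \<in> V \<Longrightarrow> pos_form V (var i * var j - var k * var l)"
  unfolding pos_form_def
  by (intro conjI exI[of _ 2] polys_in_diff polys_in_mult polys_in_var homogeneous_quadric) simp_all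

lemma strength_minor_del_0: "strength {..<12} (minor_del 0) \<le> 2"
proof -
  define g where "g j = var (3 * (j + 1))" for j :: nat
  define h where "h j = (if j = 0 then var 7 * var 11 - var 10 * var 8
      else if j = 1 then var 10 * var 5 - var 4 * var 11 else var 4 * var 8 - var 7 * var 5)" for j :: nat
  have "minor_del 0 = (\<Sum>j\<le>2. g j * h j)"
    unfolding minor_del_0_laplace by (simp add: g_def h_def numeral_2_eq_2 algebra_simps)
  moreover have "\<forall>j\<le>2. pos_form {..<12} (g j) \<and> pos_form {..<12} (h j)"
    by (auto simp: g_def h_def intro!: pos_form_var pos_form_quadric)
  ultimately have "strength {..<12} (minor_del 0) \<le> ereal (real 2)"
    by (intro strength_le_decomposition)
  then show ?thesis
    by simp
qed

lemma coll_strength_maximal_minors: "coll_strength {..<12} maximal_minors = 2"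
proof (rule antisym)
  have "lin_comb maximal_minors (\<lambda>i. if i = 0 then 1 else 0) = minor_del 0"
    by (simp add: lin_comb_def const_poly_def lessThan_nat_numeral lessThan_Suc)
  then have "coll_strength {..<12} maximal_minors \<le> strength {..<12} (minor_del 0)"
    using coll_strength_le[of 0 maximal_minors "\<lambda>i. if i = 0 then 1 else 0"] by simp
  then show "coll_strength {..<12} maximal_minors \<le> 2"
    using strength_minor_del_0 by (rule order_trans)
  show "2 \<le> coll_strength {..<12} maximal_minors"
  proof (rule coll_strength_geI)
    fix c :: "nat \<Rightarrow> complex" and i :: nat
    assume "i < length maximal_minors" "c i \<noteq> 0"
    then show "2 \<le> strength {..<12} (lin_comb maximal_minors c)"
      by (intro strength_maximal_minor_combination[of i]) (simp_all add: eval_nat_numeral)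
  qed
qed

lemma maximal_minors_syzygy:
  "(var 10 * var 6 - var 9 * var 7) * minor_del 2
     = (var 9 * var 1 - var 10 * var 0) * minor_del 0 + (var 10 * var 3 - var 9 * var 4) * minor_del 1"
  by (simp add: minor_del_def det3_eq_sarrus sarrus_def genM_def algebra_simps)

lemma syzygy_in_ideal:
  "(var 10 * var 6 - var 9 * var 7) * minor_del 2 \<in> ideal_gen {..<12} [minor_del 0, minor_del 1]"
proof -
  define a where "a j = (if j = 0 then var 9 * var 1 - var 10 * var 0 else var 10 * var 3 - var 9 * var 4)"
    for j :: nat
  have "(var 10 * var 6 - var 9 * var 7) * minor_del 2
      = (\<Sum>j<length [minor_del 0, minor_del 1]. a j * [minor_del 0, minor_del 1] ! j)"
    by (simp add: a_def maximal_minors_syzygy)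
  moreover have "\<forall>j<length [minor_del 0, minor_del 1]. a j \<in> polys_in {..<12}"
    unfolding a_def by (auto intro!: polys_in_diff polys_in_mult polys_in_var)
  ultimately show ?thesis
    unfolding ideal_gen_def by blast
qed

lemma quadric_not_in_ideal:
  "var 10 * var 6 - var 9 * var 7 \<notin> ideal_gen {..<12} [minor_del 0, minor_del 1]"
proof (rule lower_degree_form_not_in_ideal[where e = 2])
  show "\<forall>f\<in>set [minor_del 0, minor_del 1]. homogeneous 3 f"
    by (simp add: homogeneous_minor_del)
  have "poly_eval (var 10 * var 6 - var 9 * var 7) (\<lambda>i. if i = 10 \<or> i = 6 then 1 else 0) = 1"
    by (simp add: poly_eval_diff poly_eval_mult)
  then show "var 10 * var 6 - var 9 * var 7 \<noteq> 0"
    by auto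
qed (simp_all add: homogeneous_quadric)

lemma maximal_minors_not_regular: "\<not> regular_seq {..<12} maximal_minors"
proof
  assume "regular_seq {..<12} maximal_minors"
  moreover have "take 2 maximal_minors = [minor_del 0, minor_del 1]"
    by (simp add: numeral_2_eq_2)
  moreover have "var 10 * var 6 - var 9 * var 7 \<in> polys_in {..<12}"
    by (intro polys_in_diff polys_in_mult polys_in_var) auto
  ultimately show False
    using syzygy_in_ideal quadric_not_in_ideal unfolding regular_seq_def by auto
qed

theorem theorem7p4:
  shows "(\<forall>k<3. minor_del k \<in> polys_in {..<12} \<and> homogeneous 3 (minor_del k))
         \<and> \<not> regular_seq {..<12} [minor_del 0, minor_del 1, minor_del 2]
         \<and> coll_strength {..<12} [minor_del 0, minor_del 1, minor_del 2] = 2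
         \<and> N_rd 3 3 > 2"
proof -
  have forms: "\<forall>k<3. minor_del k \<in> polys_in {..<12} \<and> homogeneous 3 (minor_del k)"
    using minor_del_in_polys homogeneous_minor_del by blast
  have "ereal (real_of_int 2) < N_rd 3 3"
    by (rule N_rd_gt_of_not_regular[of maximal_minors])
      (use forms coll_strength_maximal_minors maximal_minors_not_regular in auto)
  then show ?thesis
    using forms maximal_minors_not_regular coll_strength_maximal_minors by simp
qed

end
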